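(* Let $(M,\omega)$ be a compact Kähler manifold of complex dimension $n$, $\chi$ a closed real $(1,1)$-form, and $\theta_0\in(0,\pi)$ the argument of $\int_M(\chi+\sqrt{-1}\omega)^n$. Let $\underline u$ be a smooth real function on $M$ with $$A_0:=\max_M\max_{1\le j\le n}\sum_{i\neq j}\operatorname{arccot}\lambda_i(\chi_{\underline u})<\theta_0\quad\text{and}\quad B_0:=\max_M\theta(\chi_{\underline u})<\pi.$$ Then the function $\underline u(x,t):=\underline u(x)$ on $M\times[0,\infty)$ is a subsolution of the parabolic equation $u_t=\cot\theta(\chi_u)-\cot\theta_0$ in the following sense: there exist constants $\delta>0$ and $K>0$ such that for every $(x,t)\in M\times[0,\infty)$ the set $$S_\delta(x,t):=\{(\mu,\tau)\in\mathbb R^n\times\mathbb R:\ \cot\theta\bigl(\lambda(\chi_{\underline u})(x)+\mu\bigr)-\underline u_t(x,t)+\tau=\cot\theta_0,\ \mu_i>-\delta\ \forall i,\ \tau>-\delta\}$$ is contained in the ball of radius $K$ centered at the origin of $\mathbb R^{n+1}$.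
   Context: $\chi_u:=\chi+\sqrt{-1}\partial\bar\partial u$; $\lambda(\chi_u)=(\lambda_1,\dots,\lambda_n)$ are the eigenvalues of $\chi_u$ with respect to $\omega$; $\operatorname{arccot}$ takes values in $(0,\pi)$; for $\lambda\in\mathbb R^n$, $\theta(\lambda):=\sum_i\operatorname{arccot}\lambda_i$ and $\theta(\chi_u):=\theta(\lambda(\chi_u))$. Here $\underline u_t\equiv 0$ since $\underline u$ is time-independent. *)

theory Defs
  imports "HOL-Analysis.Analysis"
begin

definition arccot :: "real \<Rightarrow> real" where
  "arccot x = pi / 2 - arctan x"

definition theta :: "real ^ 'n \<Rightarrow> real" where
  "theta lam = (\<Sum>i\<in>UNIV. arccot (lam $ i))"

text \<open>The subsolution set S_delta(x,t); lam = lambda(chi_ubar)(x), ut = ubar_t(x,t).\<close>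
definition S_set :: "real \<Rightarrow> real \<Rightarrow> real ^ 'n \<Rightarrow> real \<Rightarrow> ((real ^ 'n) \<times> real) set" where
  "S_set \<theta>0 \<delta> lam ut = {(\<mu>, \<tau>). cot (theta (lam + \<mu>)) - ut + \<tau> = cot \<theta>0
      \<and> (\<forall>i. \<mu> $ i > - \<delta>) \<and> \<tau> > - \<delta>}"

end

theory Submission
  imports Defs
begin

text \<open>Since arccot is decreasing and 1-Lipschitz, a perturbation with \<open>\<mu>\<^sub>i > -\<delta>\<close> raises
  each of the \<open>n\<close> terms of \<open>\<theta>(\<lambda> + \<mu>)\<close> by less than \<open>\<delta>\<close>. For small \<open>\<delta>\<close> this keeps
  \<open>\<theta>(\<lambda> + \<mu>) \<le> B\<^sub>0 + n\<delta> < \<pi>\<close>, so \<open>cot \<theta>(\<lambda> + \<mu>)\<close>, and with it \<open>\<tau>\<close>, is bounded.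
  On the other hand \<open>\<tau> > -\<delta>\<close> gives \<open>cot \<theta>(\<lambda> + \<mu>) < cot \<theta>\<^sub>0 + \<delta>\<close>, so \<open>\<theta>(\<lambda> + \<mu>)\<close> exceeds
  some \<open>\<theta>\<^sub>1 > A\<^sub>0 + n\<delta>\<close>. The other \<open>n - 1\<close> terms sum to at most \<open>A\<^sub>0 + n\<delta>\<close>, hence
  \<open>arccot(\<lambda>\<^sub>j + \<mu>\<^sub>j) > \<theta>\<^sub>1 - A\<^sub>0 - n\<delta> > 0\<close>, which bounds \<open>\<mu>\<^sub>j\<close> from above.\<close>

lemma arccot_pos: "0 < arccot x" and arccot_less_pi: "arccot x < pi"
  unfolding arccot_def using arctan_bounded[of x] by auto

lemma arccot_less_iff: "arccot x < arccot y \<longleftrightarrow> y < x"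
  unfolding arccot_def by (simp add: arctan_less_iff)

lemma arccot_le_iff: "arccot x \<le> arccot y \<longleftrightarrow> y \<le> x"
  unfolding arccot_def by (simp add: arctan_le_iff)

lemma arccot_cot: "0 < x \<Longrightarrow> x < pi \<Longrightarrow> arccot (cot x) = x"
  unfolding arccot_def by (simp add: tan_cot' [symmetric] arctan_tan)

lemma less_cot_iff_less_arccot:
  assumes "0 < c" "c < pi"
  shows "x < cot c \<longleftrightarrow> c < arccot x"
  using arccot_less_iff[of "cot c" x] arccot_cot[OF assms] by simp

lemma cot_less_cot_iff:
  assumes "0 < x" "x < pi" "0 < y" "y < pi"
  shows "cot x < cot y \<longleftrightarrow> y < x"
  using arccot_less_iff[of "cot y" "cot x"] arccot_cot[OF assms(1,2)] arccot_cot[OF assms(3,4)]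
  by simp

lemma cot_le_cot_iff:
  assumes "0 < x" "x < pi" "0 < y" "y < pi"
  shows "cot x \<le> cot y \<longleftrightarrow> y \<le> x"
  using cot_less_cot_iff[OF assms(3,4,1,2)] by linarith

lemma arctan_diff_le:
  assumes "0 \<le> d"
  shows "arctan a - arctan (a - d) \<le> d"
proof (cases "d = 0")
  case False
  with assms have "a - d < a" by simp
  from MVT2[OF this, of arctan "\<lambda>x. inverse (1 + x\<^sup>2)"] DERIV_arctan
  obtain z where "arctan a - arctan (a - d) = d * inverse (1 + z\<^sup>2)"
    by auto
  moreover have "inverse (1 + z\<^sup>2) \<le> 1"
    by (simp add: add_nonneg_pos inverse_le_1_iff)
  ultimately show ?thesis
    using assms by (simp add: mult_left_le)
qed simp

lemma arccot_add_le:
  assumes "0 \<le> \<delta>" "-\<delta> < m"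
  shows "arccot (a + m) \<le> arccot a + \<delta>"
proof -
  have "arccot (a + m) \<le> arccot (a - \<delta>)"
    using assms(2) by (simp add: arccot_le_iff)
  also have "\<dots> \<le> arccot a + \<delta>"
    using arctan_diff_le[OF assms(1), of a] by (simp add: arccot_def)
  finally show ?thesis .
qed

lemma sum_arccot_nonneg: "0 \<le> (\<Sum>i\<in>S. arccot (v $ i))"
  by (intro sum_nonneg) (simp add: arccot_pos less_imp_le)

lemma theta_pos: "0 < theta v"
  unfolding theta_def by (intro sum_pos) (auto simp: arccot_pos)

lemma theta_less: "theta (v :: real ^ 'n) < CARD('n) * pi"
proof -
  have "theta v < (\<Sum>i\<in>(UNIV :: 'n set). pi)"
    unfolding theta_def by (intro sum_strict_mono) (auto simp: arccot_less_pi)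
  then show ?thesis by simp
qed

lemma theta_remove: "theta v = arccot (v $ j) + (\<Sum>i\<in>UNIV - {j}. arccot (v $ i))"
  unfolding theta_def by (subst sum.remove[of _ j]) auto

lemma sum_arccot_le_theta: "(\<Sum>i\<in>S. arccot (v $ i)) \<le> theta v"
  unfolding theta_def
  by (intro sum_mono2) (auto simp: arccot_pos less_imp_le)

lemma sum_arccot_add_le:
  fixes v \<mu> :: "real ^ 'n" and \<delta> :: real
  assumes "0 \<le> \<delta>" "\<And>i. -\<delta> < \<mu> $ i"
  shows "(\<Sum>i\<in>S. arccot ((v + \<mu>) $ i)) \<le> (\<Sum>i\<in>S. arccot (v $ i)) + CARD('n) * \<delta>"
proof -
  have "(\<Sum>i\<in>S. arccot ((v + \<mu>) $ i)) \<le> (\<Sum>i\<in>S. arccot (v $ i) + \<delta>)"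
    using assms by (intro sum_mono) (simp add: arccot_add_le)
  also have "\<dots> = (\<Sum>i\<in>S. arccot (v $ i)) + card S * \<delta>"
    by (simp add: sum.distrib)
  also have "\<dots> \<le> (\<Sum>i\<in>S. arccot (v $ i)) + CARD('n) * \<delta>"
    using assms(1) by (simp add: card_mono mult_right_mono)
  finally show ?thesis .
qed

lemma norm_Pair_le_cart:
  fixes \<mu> :: "real ^ 'n" and U T :: real
  assumes "\<And>i. \<bar>\<mu> $ i\<bar> \<le> U" "\<bar>\<tau>\<bar> \<le> T"
  shows "norm (\<mu>, \<tau>) \<le> CARD('n) * U + T"
proof -
  have "norm \<mu> \<le> (\<Sum>i\<in>UNIV. \<bar>\<mu> $ i\<bar>)"
    by (rule norm_le_l1_cart)
  also have "\<dots> \<le> (\<Sum>i\<in>(UNIV :: 'n set). U)"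
    by (intro sum_mono assms(1))
  finally show ?thesis
    using norm_Pair_le[of \<mu> \<tau>] assms(2) by simp
qed

lemma S_set_subset_cball:
  fixes lam :: "real ^ 'n"
  defines "N \<equiv> real CARD('n)"
  assumes "0 < \<delta>"
    and A: "\<And>j. (\<Sum>i\<in>UNIV - {j}. arccot (lam $ i)) \<le> A"
    and B: "theta lam \<le> B" "B + N * \<delta> < pi"
    and \<theta>1: "\<theta>1 < pi" "cot \<theta>0 + \<delta> \<le> cot \<theta>1" "A + N * \<delta> < \<theta>1"
  shows "S_set \<theta>0 \<delta> lam 0 \<subseteq>
    cball 0 (N * max \<delta> (cot (\<theta>1 - A - N * \<delta>) - cot B) + max \<delta> (cot \<theta>0 - cot (B + N * \<delta>)))"
proof clarify
  fix \<mu> \<tau> assume "(\<mu>, \<tau>) \<in> S_set \<theta>0 \<delta> lam 0"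
  then have eq: "cot (theta (lam + \<mu>)) + \<tau> = cot \<theta>0" and \<mu>: "\<And>i. -\<delta> < \<mu> $ i" and "-\<delta> < \<tau>"
    by (auto simp: S_set_def)
  define s where "s = theta (lam + \<mu>)"
  define \<epsilon> where "\<epsilon> = \<theta>1 - A - N * \<delta>"
  have "0 \<le> A"
    using A[of undefined] sum_arccot_nonneg order_trans by blast
  moreover have "0 \<le> N * \<delta>"
    using \<open>0 < \<delta>\<close> by (simp add: N_def)
  ultimately have \<epsilon>: "0 < \<epsilon>" "\<epsilon> < pi" "0 < \<theta>1" and "B < pi"
    using \<theta>1 B(2) by (auto simp: \<epsilon>_def)
  have "0 < B"
    using B(1) theta_pos[of lam] by linarith
  have s_pos: "0 < s"
    by (simp add: s_def theta_pos)
  have s_le: "s \<le> B + N * \<delta>"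
    using sum_arccot_add_le[OF _ \<mu>, where S=UNIV and v=lam] \<open>0 < \<delta>\<close> B(1)
    by (simp add: s_def theta_def N_def)
  have "cot s < cot \<theta>1"
    using eq \<open>-\<delta> < \<tau>\<close> \<theta>1(2) by (simp add: s_def)
  then have s_gt: "\<theta>1 < s"
    using cot_less_cot_iff[of s \<theta>1] s_pos s_le B(2) \<epsilon> \<theta>1(1) by linarith
  have "cot (B + N * \<delta>) \<le> cot s"
    using cot_le_cot_iff[of "B + N * \<delta>" s] s_pos s_le B(2) by linarith
  then have \<tau>_bound: "\<bar>\<tau>\<bar> \<le> max \<delta> (cot \<theta>0 - cot (B + N * \<delta>))"
    using eq \<open>-\<delta> < \<tau>\<close> by (simp add: s_def)
  have \<mu>_bound: "\<bar>\<mu> $ j\<bar> \<le> max \<delta> (cot \<epsilon> - cot B)" for j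
  proof -
    have "(\<Sum>i\<in>UNIV - {j}. arccot ((lam + \<mu>) $ i)) \<le> A + N * \<delta>"
      using sum_arccot_add_le[OF _ \<mu>, where S="UNIV - {j}" and v=lam] \<open>0 < \<delta>\<close> A[of j]
      by (simp add: N_def)
    then have "\<epsilon> < arccot ((lam + \<mu>) $ j)"
      using theta_remove[of "lam + \<mu>" j] s_gt by (simp add: s_def \<epsilon>_def)
    then have upper: "lam $ j + \<mu> $ j < cot \<epsilon>"
      using less_cot_iff_less_arccot[OF \<epsilon>(1,2)] by simp
    have "arccot (lam $ j) \<le> B"
      using sum_arccot_le_theta[of lam "{j}"] B(1) by simp
    then have "cot B \<le> lam $ j"
      using less_cot_iff_less_arccot[OF \<open>0 < B\<close> \<open>B < pi\<close>, of "lam $ j"] by linarith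
    then show ?thesis
      using upper \<mu>[of j] by linarith
  qed
  show "(\<mu>, \<tau>) \<in> cball 0 (N * max \<delta> (cot (\<theta>1 - A - N * \<delta>) - cot B) + max \<delta> (cot \<theta>0 - cot (B + N * \<delta>)))"
    using norm_Pair_le_cart[OF \<mu>_bound \<tau>_bound] by (simp add: N_def \<epsilon>_def)
qed

lemma perturbation_constants_exist:
  fixes N :: real
  assumes "0 < N" "A < \<theta>0" "0 < \<theta>0" "\<theta>0 < pi" "B < pi"
  shows "\<exists>\<delta> \<theta>1. 0 < \<delta> \<and> B + N * \<delta> < pi \<and> \<theta>1 < pi \<and> cot \<theta>0 + \<delta> \<le> cot \<theta>1 \<and> A + N * \<delta> < \<theta>1"
proof -
  define \<theta>1 where "\<theta>1 = (\<theta>0 + max A 0) / 2"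
  have \<theta>1: "0 < \<theta>1" "\<theta>1 < \<theta>0" "A < \<theta>1"
    using assms by (auto simp: \<theta>1_def)
  then have "cot \<theta>0 < cot \<theta>1"
    using cot_less_cot_iff[of \<theta>0 \<theta>1] assms by simp
  define \<delta> where "\<delta> = min (cot \<theta>1 - cot \<theta>0) (min ((\<theta>1 - A) / (2 * N)) ((pi - B) / (2 * N)))"
  have "0 < \<delta>"
    using \<open>cot \<theta>0 < cot \<theta>1\<close> \<theta>1 assms by (simp add: \<delta>_def)
  moreover have "\<delta> \<le> (\<theta>1 - A) / (2 * N)" "\<delta> \<le> (pi - B) / (2 * N)"
    by (simp_all add: \<delta>_def)
  then have "N * \<delta> \<le> (\<theta>1 - A) / 2" "N * \<delta> \<le> (pi - B) / 2"
    using \<open>0 < N\<close> by (simp_all add: field_simps)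
  ultimately show ?thesis
    using \<theta>1 assms by (intro exI[of _ \<delta>] exI[of _ \<theta>1]) (auto simp: \<delta>_def)
qed

lemma sum_arccot_le_SUP_Max:
  fixes lam :: "'m \<Rightarrow> real ^ 'n"
  assumes "x \<in> M"
  shows "(\<Sum>i\<in>UNIV - {j}. arccot (lam x $ i))
    \<le> (SUP x\<in>M. Max ((\<lambda>j. \<Sum>i\<in>UNIV - {j}. arccot (lam x $ i)) ` UNIV))"
proof -
  have "Max ((\<lambda>j. \<Sum>i\<in>UNIV - {j}. arccot (v $ i)) ` UNIV) \<le> CARD('n) * pi" for v :: "real ^ 'n"
    using order_trans[OF sum_arccot_le_theta[of v] less_imp_le[OF theta_less[of v]]]
    by (simp add: Max_le_iff)
  then have "Max ((\<lambda>j. \<Sum>i\<in>UNIV - {j}. arccot (lam x $ i)) ` UNIV)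
      \<le> (SUP x\<in>M. Max ((\<lambda>j. \<Sum>i\<in>UNIV - {j}. arccot (lam x $ i)) ` UNIV))"
    using assms by (intro cSUP_upper bdd_aboveI2) auto
  moreover have "(\<Sum>i\<in>UNIV - {j}. arccot (lam x $ i)) \<le> Max ((\<lambda>j. \<Sum>i\<in>UNIV - {j}. arccot (lam x $ i)) ` UNIV)"
    by (rule Max_ge) auto
  ultimately show ?thesis
    by linarith
qed

lemma theta_le_SUP:
  fixes lam :: "'m \<Rightarrow> real ^ 'n"
  assumes "x \<in> M"
  shows "theta (lam x) \<le> (SUP x\<in>M. theta (lam x))"
  using assms theta_less by (intro cSUP_upper bdd_aboveI2[where M = "CARD('n) * pi"]) (auto intro: less_imp_le)

theorem lemma2p7:
  fixes M :: "'m::topological_space set"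
    and lam :: "'m \<Rightarrow> real ^ 'n"
    and ubar :: "'m \<Rightarrow> real"
    and \<theta>0 :: real
  assumes "compact M" and "M \<noteq> {}"
    and "continuous_on M lam"
    and "0 < \<theta>0" and "\<theta>0 < pi"
    and "(SUP x\<in>M. Max ((\<lambda>j. \<Sum>i\<in>UNIV - {j}. arccot (lam x $ i)) ` UNIV)) < \<theta>0"
    and "(SUP x\<in>M. theta (lam x)) < pi"
  shows "\<exists>\<delta> K. \<delta> > 0 \<and> K > 0 \<and>
           (\<forall>x\<in>M. \<forall>t\<ge>(0::real).
              S_set \<theta>0 \<delta> (lam x) (deriv (\<lambda>s. ubar x) t) \<subseteq> ball 0 K)"
proof -
  \<comment> \<open>The time derivative of the constant \<open>ubar x\<close> is 0.\<close>
  define N where "N = real CARD('n)"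
  define A0 where "A0 = (SUP x\<in>M. Max ((\<lambda>j. \<Sum>i\<in>UNIV - {j}. arccot (lam x $ i)) ` UNIV))"
  define B0 where "B0 = (SUP x\<in>M. theta (lam x))"
  obtain \<delta> \<theta>1 where \<delta>: "0 < \<delta>" "B0 + N * \<delta> < pi" "\<theta>1 < pi" "cot \<theta>0 + \<delta> \<le> cot \<theta>1" "A0 + N * \<delta> < \<theta>1"
    using perturbation_constants_exist[of N A0 \<theta>0 B0] assms(4-7) by (auto simp: N_def A0_def B0_def)
  define K where "K = N * max \<delta> (cot (\<theta>1 - A0 - N * \<delta>) - cot B0) + max \<delta> (cot \<theta>0 - cot (B0 + N * \<delta>))"
  have "0 < K"
    using \<delta>(1) by (auto simp: K_def N_def intro!: add_nonneg_pos)
  have "S_set \<theta>0 \<delta> (lam x) 0 \<subseteq> cball 0 K" if "x \<in> M" for x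
    unfolding K_def N_def using \<delta> that
    by (intro S_set_subset_cball) (auto simp: N_def A0_def B0_def sum_arccot_le_SUP_Max theta_le_SUP)
  moreover have "cball 0 K \<subseteq> ball (0 :: (real ^ 'n) \<times> real) (K + 1)"
    by auto
  ultimately show ?thesis
    using \<delta>(1) \<open>0 < K\<close> by (rule_tac exI[of _ \<delta>], rule_tac exI[of _ "K + 1"]) auto
qed

end
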